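(* Let $(X,d_X)$ and $(Y,d_Y)$ be ultrametric spaces and let $d$ be a partial distance-preserving metric on $X\times Y$ such that $d_\infty\le d$ on $(X\times Y)\times(X\times Y)$. Then the following are equivalent: (i) $d$ is an ultrametric on $X\times Y$; (ii) for all compact sets $W\subseteq X$, $Z\subseteq Y$ and every $\varepsilon>0$, $$\mathcal M_\varepsilon(W\times Z)=\mathcal M_\varepsilon(W)\cdot\mathcal M_\varepsilon(Z),$$ where $\mathcal M_\varepsilon(W)$, $\mathcal M_\varepsilon(Z)$, $\mathcal M_\varepsilon(W\times Z)$ are computed in $(X,d_X)$, $(Y,d_Y)$, $(X\times Y,d)$ respectively.
   Context: $d_\infty((x_1,y_1),(x_2,y_2))=\max\{d_X(x_1,x_2),d_Y(y_1,y_2)\}$. A metric $d$ on $X\times Y$ is partial distance-preserving if $d((x_1,y),(x_2,y))=d_X(x_1,x_2)$ and $d((x,y_1),(x,y_2))=d_Y(y_1,y_2)$ for all $x,x_1,x_2\in X$, $y,y_1,y_2\in Y$. A metric $\rho$ is an ultrametric if $\rho(a,b)\le\max\{\rho(a,c),\rho(c,b)\}$. In a metric space $(M,\rho)$, a set $A$ is $\varepsilon$-distinguishable if $\rho(a,b)>\varepsilon$ for distinct $a,b\in A$, and for a totally bounded $V\subseteq M$ the packing number $\mathcal M_\varepsilon(V)$ is the maximal cardinality of an $\varepsilon$-distinguishable subset of $V$ (so $\mathcal M_\varepsilon(\emptyset)=0$). *)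

theory Defs
  imports "HOL-Analysis.Analysis"
begin

definition ultrametric :: "'a set \<Rightarrow> ('a \<Rightarrow> 'a \<Rightarrow> real) \<Rightarrow> bool" where
  "ultrametric M \<rho> \<longleftrightarrow> Metric_space M \<rho> \<and>
     (\<forall>a\<in>M. \<forall>b\<in>M. \<forall>c\<in>M. \<rho> a b \<le> max (\<rho> a c) (\<rho> c b))"

definition dinf :: "('a \<Rightarrow> 'a \<Rightarrow> real) \<Rightarrow> ('b \<Rightarrow> 'b \<Rightarrow> real) \<Rightarrow> ('a \<times> 'b) \<Rightarrow> ('a \<times> 'b) \<Rightarrow> real" where
  "dinf dX dY p q = max (dX (fst p) (fst q)) (dY (snd p) (snd q))"

definition partial_distance_preserving ::
  "'a set \<Rightarrow> ('a \<Rightarrow> 'a \<Rightarrow> real) \<Rightarrow> 'b set \<Rightarrow> ('b \<Rightarrow> 'b \<Rightarrow> real) \<Rightarrow> ('a \<times> 'b \<Rightarrow> 'a \<times> 'b \<Rightarrow> real) \<Rightarrow> bool" where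
  "partial_distance_preserving X dX Y dY d \<longleftrightarrow>
     (\<forall>x1\<in>X. \<forall>x2\<in>X. \<forall>y\<in>Y. d (x1, y) (x2, y) = dX x1 x2) \<and>
     (\<forall>x\<in>X. \<forall>y1\<in>Y. \<forall>y2\<in>Y. d (x, y1) (x, y2) = dY y1 y2)"

definition eps_distinguishable :: "('a \<Rightarrow> 'a \<Rightarrow> real) \<Rightarrow> real \<Rightarrow> 'a set \<Rightarrow> bool" where
  "eps_distinguishable \<rho> \<epsilon> A \<longleftrightarrow> (\<forall>a\<in>A. \<forall>b\<in>A. a \<noteq> b \<longrightarrow> \<rho> a b > \<epsilon>)"

text \<open>Packing number: maximal cardinality of an eps-distinguishable subset of V
  (for totally bounded V such subsets are finite and of bounded size).\<close>
definition packing_number :: "('a \<Rightarrow> 'a \<Rightarrow> real) \<Rightarrow> real \<Rightarrow> 'a set \<Rightarrow> nat" where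
  "packing_number \<rho> \<epsilon> V = Sup {card A | A. A \<subseteq> V \<and> finite A \<and> eps_distinguishable \<rho> \<epsilon> A}"

end

theory Submission
  imports Defs
begin

(* Call S an epsilon-net of V if S is a finite epsilon-distinguishable
   subset of V such that every point of V lies within epsilon of S.  In an
   ultrametric space two points within epsilon of the same net point are within
   epsilon of each other, so every epsilon-distinguishable subset of V injects into
   a net: the packing number of V is exactly the size of any epsilon-net.
   Compact sets are totally bounded and therefore have epsilon-nets.
   (i) => (ii): if d is an ultrametric, the product S x T of epsilon-nets of W and Z
   is an epsilon-net of W x Z (distinguishability from d_inf <= d, covering from the
   ultrametric inequality through the point (s, z) and partial distance
   preservation), so the packing numbers multiply.
   (ii) => (i): on a two-point set {x1,x2} in an ultrametric space the packing
   number at level eps = d_inf((x1,y1),(x2,y2)) is 1, so the product formula makes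
   the packing number of {x1,x2} x {y1,y2} equal to 1; hence (x1,y1) and (x2,y2)
   are not eps-distinguishable, i.e. d <= d_inf.  Thus d = d_inf, which is an
   ultrametric as the maximum of two ultrametrics. *)

definition eps_net :: "('a \<Rightarrow> 'a \<Rightarrow> real) \<Rightarrow> real \<Rightarrow> 'a set \<Rightarrow> 'a set \<Rightarrow> bool" where
  "eps_net \<rho> \<epsilon> V S \<longleftrightarrow> S \<subseteq> V \<and> finite S \<and> eps_distinguishable \<rho> \<epsilon> S \<and>
     (\<forall>v\<in>V. \<exists>s\<in>S. \<rho> v s \<le> \<epsilon>)"

lemma ultrametricD:
  assumes "ultrametric M \<rho>" "a \<in> M" "b \<in> M" "c \<in> M"
  shows "\<rho> a b \<le> max (\<rho> a c) (\<rho> c b)"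
  using assms unfolding ultrametric_def by blast

lemma ultrametric_metric: "ultrametric M \<rho> \<Longrightarrow> Metric_space M \<rho>"
  unfolding ultrametric_def by blast

lemma card_le_packing_number:
  assumes "finite V" "A \<subseteq> V" "eps_distinguishable \<rho> \<epsilon> A"
  shows "card A \<le> packing_number \<rho> \<epsilon> V"
  unfolding packing_number_def
proof (rule cSup_upper)
  show "card A \<in> {card A | A. A \<subseteq> V \<and> finite A \<and> eps_distinguishable \<rho> \<epsilon> A}"
    using assms finite_subset by blast
  show "bdd_above {card A | A. A \<subseteq> V \<and> finite A \<and> eps_distinguishable \<rho> \<epsilon> A}"
    by (rule bdd_aboveI[of _ "card V"]) (use assms(1) card_mono in blast)
qed

(* In an ultrametric space the packing number of V is the size of any epsilon-net:
   sending each point of a distinguishable set to a net point within epsilon is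
   injective, by the ultrametric inequality. *)
lemma packing_number_eq_card_net:
  assumes ult: "ultrametric M \<rho>" and VM: "V \<subseteq> M" and net: "eps_net \<rho> \<epsilon> V S"
  shows "packing_number \<rho> \<epsilon> V = card S"
proof -
  have SV: "S \<subseteq> V" and fS: "finite S" and dS: "eps_distinguishable \<rho> \<epsilon> S"
    and cov: "\<forall>v\<in>V. \<exists>s\<in>S. \<rho> v s \<le> \<epsilon>"
    using net unfolding eps_net_def by auto
  have sym: "\<rho> a b = \<rho> b a" for a b
    using Metric_space.commute[OF ultrametric_metric[OF ult]] .
  let ?K = "{card A | A. A \<subseteq> V \<and> finite A \<and> eps_distinguishable \<rho> \<epsilon> A}"
  have bounded: "card A \<le> card S"
    if A: "A \<subseteq> V" "eps_distinguishable \<rho> \<epsilon> A" for A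
  proof -
    have "\<forall>a\<in>A. \<exists>s. s \<in> S \<and> \<rho> a s \<le> \<epsilon>" using cov A(1) by blast
    then obtain f where f: "\<And>a. a \<in> A \<Longrightarrow> f a \<in> S \<and> \<rho> a (f a) \<le> \<epsilon>"
      by (metis bchoice)
    have "inj_on f A"
    proof (rule inj_onI)
      fix a b assume ab: "a \<in> A" "b \<in> A" "f a = f b"
      have "\<rho> a b \<le> max (\<rho> a (f a)) (\<rho> (f a) b)"
        using ultrametricD[OF ult] f[OF ab(1)] ab(1,2) A(1) SV VM by blast
      also have "\<dots> \<le> \<epsilon>" using f[OF ab(1)] f[OF ab(2)] ab(3) sym by simp
      finally show "a = b" using A(2) ab(1,2) unfolding eps_distinguishable_def by force
    qed
    then show ?thesis using card_inj_on_le[of f A S] f fS by blast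
  qed
  have "card S \<in> ?K" using SV fS dS by blast
  then show ?thesis unfolding packing_number_def
    by (rule cSup_eq_maximum) (use bounded in blast)
qed

lemma finite_set_has_net:
  assumes "Metric_space M \<rho>" "finite K" "K \<subseteq> M" "\<epsilon> \<ge> 0"
  shows "\<exists>S. eps_net \<rho> \<epsilon> K S"
  using assms(2,3)
proof (induction K rule: finite_induct)
  case empty
  show ?case by (rule exI[of _ "{}"]) (simp add: eps_net_def eps_distinguishable_def)
next
  case (insert k K)
  then obtain S where S: "eps_net \<rho> \<epsilon> K S" by blast
  show ?case
  proof (cases "\<exists>s\<in>S. \<rho> k s \<le> \<epsilon>")
    case True
    then show ?thesis using S unfolding eps_net_def by blast
  next
    case False
    have "\<epsilon> < \<rho> k s \<and> \<epsilon> < \<rho> s k" if "s \<in> S" for s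
      using False that Metric_space.commute[OF assms(1), of s k] by auto
    then have "eps_distinguishable \<rho> \<epsilon> (insert k S)"
      using S unfolding eps_net_def eps_distinguishable_def by auto
    moreover have "\<rho> k k \<le> \<epsilon>"
      using Metric_space.zero[OF assms(1), of k k] insert.prems assms(4) by simp
    ultimately have "eps_net \<rho> \<epsilon> (insert k K) (insert k S)"
      using S unfolding eps_net_def by blast
    then show ?thesis ..
  qed
qed

(* Compact subsets of an ultrametric space have epsilon-nets: take a finite
   epsilon-ball cover (total boundedness), thin its centres greedily, and use the
   ultrametric inequality to pass from a centre to the chosen net point. *)
lemma compact_has_net:
  assumes ult: "ultrametric M \<rho>" and W: "compactin (Metric_space.mtopology M \<rho>) W"
    and e: "\<epsilon> > 0"
  shows "\<exists>S. eps_net \<rho> \<epsilon> W S"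
proof -
  have ms: "Metric_space M \<rho>" using ultrametric_metric[OF ult] .
  have WM: "W \<subseteq> M"
    using compactin_subset_topspace[OF W] Metric_space.topspace_mtopology[OF ms] by simp
  obtain K where K: "finite K" "K \<subseteq> W" "W \<subseteq> (\<Union>x\<in>K. Metric_space.mball M \<rho> x \<epsilon>)"
    using Metric_space.compactin_imp_mtotally_bounded[OF ms W] e
    unfolding Metric_space.mtotally_bounded_def[OF ms] by (elim allE impE exE conjE) auto
  have KM: "K \<subseteq> M" using K(2) WM by (rule order_trans)
  obtain S where S: "eps_net \<rho> \<epsilon> K S"
    using finite_set_has_net[OF ms K(1) KM less_imp_le[OF e]] by blast
  have SM: "S \<subseteq> M" using S KM unfolding eps_net_def by auto
  have "\<exists>s\<in>S. \<rho> w s \<le> \<epsilon>" if w: "w \<in> W" for w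
  proof -
    obtain k where k: "k \<in> K" "w \<in> Metric_space.mball M \<rho> k \<epsilon>"
      using K(3) w by (auto simp del: Metric_space.in_mball)
    then have "\<rho> w k < \<epsilon>"
      using Metric_space.in_mball[OF ms] Metric_space.commute[OF ms, of k w] by simp
    obtain s where s: "s \<in> S" "\<rho> k s \<le> \<epsilon>" using S k(1) unfolding eps_net_def by blast
    have "\<rho> w s \<le> max (\<rho> w k) (\<rho> k s)"
      using ultrametricD[OF ult] w k(1) s(1) KM SM WM by (meson subsetD)
    then show ?thesis using s \<open>\<rho> w k < \<epsilon>\<close> by force
  qed
  then have "eps_net \<rho> \<epsilon> W S" using S K(2) unfolding eps_net_def by blast
  then show ?thesis ..
qed

(* Under (i), products of epsilon-nets are epsilon-nets of the product:
   distinguishability comes from d_inf <= d, covering from the ultrametric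
   inequality via the intermediate point (s, z). *)
lemma product_of_nets:
  assumes ult: "ultrametric (X \<times> Y) d"
    and pdp: "partial_distance_preserving X dX Y dY d"
    and ge: "\<forall>p\<in>X \<times> Y. \<forall>q\<in>X \<times> Y. dinf dX dY p q \<le> d p q"
    and WX: "W \<subseteq> X" and ZY: "Z \<subseteq> Y"
    and S: "eps_net dX \<epsilon> W S" and T: "eps_net dY \<epsilon> Z T"
  shows "eps_net d \<epsilon> (W \<times> Z) (S \<times> T)"
proof -
  have SW: "S \<subseteq> W" and TZ: "T \<subseteq> Z" using S T unfolding eps_net_def by auto
  have "eps_distinguishable d \<epsilon> (S \<times> T)"
    unfolding eps_distinguishable_def
  proof (intro ballI impI)
    fix p q assume pq: "p \<in> S \<times> T" "q \<in> S \<times> T" "p \<noteq> q"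
    obtain x1 y1 x2 y2 where p: "p = (x1, y1)" and q: "q = (x2, y2)" by (cases p, cases q)
    have mem: "x1 \<in> S" "y1 \<in> T" "x2 \<in> S" "y2 \<in> T" and ne: "(x1, y1) \<noteq> (x2, y2)"
      using pq unfolding p q by auto
    have "\<epsilon> < dX x1 x2 \<or> \<epsilon> < dY y1 y2"
      using S T mem ne unfolding eps_net_def eps_distinguishable_def by auto
    moreover have "dinf dX dY (x1, y1) (x2, y2) \<le> d (x1, y1) (x2, y2)"
      using ge mem SW TZ WX ZY by blast
    ultimately show "\<epsilon> < d p q" unfolding p q by (auto simp: dinf_def)
  qed
  moreover have "\<exists>q\<in>S \<times> T. d (w, z) q \<le> \<epsilon>" if wz: "w \<in> W" "z \<in> Z" for w z
  proof -
    obtain s t where st: "s \<in> S" "dX w s \<le> \<epsilon>" "t \<in> T" "dY z t \<le> \<epsilon>"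
      using S T wz unfolding eps_net_def by blast
    have mem: "w \<in> X" "z \<in> Y" "s \<in> X" "t \<in> Y" using wz st SW TZ WX ZY by auto
    have "d (w, z) (s, t) \<le> max (d (w, z) (s, z)) (d (s, z) (s, t))"
      using ultrametricD[OF ult] mem by simp
    also have "\<dots> = max (dX w s) (dY z t)"
      using pdp mem unfolding partial_distance_preserving_def by simp
    finally show ?thesis using st by force
  qed
  ultimately show ?thesis using S T unfolding eps_net_def by auto
qed

(* Direction (i) => (ii): packing numbers of compact rectangles multiply, since
   the packing numbers are the sizes of epsilon-nets and nets multiply. *)
lemma packing_number_product:
  assumes ultX: "ultrametric X dX" and ultY: "ultrametric Y dY"
    and ult: "ultrametric (X \<times> Y) d"
    and pdp: "partial_distance_preserving X dX Y dY d"
    and ge: "\<forall>p\<in>X \<times> Y. \<forall>q\<in>X \<times> Y. dinf dX dY p q \<le> d p q"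
    and W: "compactin (Metric_space.mtopology X dX) W"
    and Z: "compactin (Metric_space.mtopology Y dY) Z" and e: "\<epsilon> > 0"
  shows "packing_number d \<epsilon> (W \<times> Z) = packing_number dX \<epsilon> W * packing_number dY \<epsilon> Z"
proof -
  have WX: "W \<subseteq> X" and ZY: "Z \<subseteq> Y"
    using compactin_subset_topspace[OF W] compactin_subset_topspace[OF Z] ultX ultY
    by (simp_all add: Metric_space.topspace_mtopology ultrametric_metric)
  obtain S T where S: "eps_net dX \<epsilon> W S" and T: "eps_net dY \<epsilon> Z T"
    using compact_has_net[OF ultX W e] compact_has_net[OF ultY Z e] by blast
  have "eps_net d \<epsilon> (W \<times> Z) (S \<times> T)"
    using product_of_nets[OF ult pdp ge WX ZY S T] .
  then show ?thesis
    using packing_number_eq_card_net[OF ult] packing_number_eq_card_net[OF ultX WX S]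
      packing_number_eq_card_net[OF ultY ZY T] WX ZY
    by (simp add: card_cartesian_product Sigma_mono)
qed

(* Under (ii), d is bounded by d_inf: at level eps = d_inf(p,q) both two-point
   factors have packing number 1, so p and q cannot be eps-distinguishable for d. *)
lemma product_formula_imp_le_dinf:
  assumes ultX: "ultrametric X dX" and ultY: "ultrametric Y dY"
    and ms: "Metric_space (X \<times> Y) d"
    and mem: "x1 \<in> X" "x2 \<in> X" "y1 \<in> Y" "y2 \<in> Y"
    and formula: "\<forall>\<epsilon>>0. packing_number d \<epsilon> ({x1, x2} \<times> {y1, y2}) =
                      packing_number dX \<epsilon> {x1, x2} * packing_number dY \<epsilon> {y1, y2}"
  shows "d (x1, y1) (x2, y2) \<le> dinf dX dY (x1, y1) (x2, y2)"
proof (rule ccontr)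
  define \<epsilon> where "\<epsilon> = max (dX x1 x2) (dY y1 y2)"
  have msX: "Metric_space X dX" and msY: "Metric_space Y dY"
    using ultX ultY by (simp_all add: ultrametric_metric)
  assume "\<not> ?thesis"
  then have far: "\<epsilon> < d (x1, y1) (x2, y2)" by (simp add: dinf_def \<epsilon>_def not_le)
  have "dX x1 x2 \<ge> 0" "dY y1 y2 \<ge> 0"
    using Metric_space.nonneg[OF msX] Metric_space.nonneg[OF msY] by auto
  then have ne: "(x1, y1) \<noteq> (x2, y2)"
    using far Metric_space.zero[OF ms, of "(x1, y1)" "(x2, y2)"] mem by (auto simp: \<epsilon>_def)
  then have "0 < dX x1 x2 \<or> 0 < dY y1 y2"
    using \<open>dX x1 x2 \<ge> 0\<close> \<open>dY y1 y2 \<ge> 0\<close> Metric_space.zero[OF msX, of x1 x2]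
      Metric_space.zero[OF msY, of y1 y2] mem by auto
  then have "\<epsilon> > 0" by (auto simp: \<epsilon>_def)
  have "eps_net dX \<epsilon> {x1, x2} {x1}"
    using Metric_space.zero[OF msX, of x1 x1] Metric_space.commute[OF msX, of x2 x1] mem \<open>\<epsilon> > 0\<close>
    by (auto simp: eps_net_def eps_distinguishable_def \<epsilon>_def)
  then have pX: "packing_number dX \<epsilon> {x1, x2} = 1"
    using packing_number_eq_card_net[OF ultX] mem by simp
  have "eps_net dY \<epsilon> {y1, y2} {y1}"
    using Metric_space.zero[OF msY, of y1 y1] Metric_space.commute[OF msY, of y2 y1] mem \<open>\<epsilon> > 0\<close>
    by (auto simp: eps_net_def eps_distinguishable_def \<epsilon>_def)
  then have pY: "packing_number dY \<epsilon> {y1, y2} = 1"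
    using packing_number_eq_card_net[OF ultY] mem by simp
  have "eps_distinguishable d \<epsilon> {(x1, y1), (x2, y2)}"
    using far Metric_space.commute[OF ms] unfolding eps_distinguishable_def by auto
  then have "card {(x1, y1), (x2, y2)} \<le> packing_number d \<epsilon> ({x1, x2} \<times> {y1, y2})"
    by (intro card_le_packing_number) auto
  then show False using formula \<open>\<epsilon> > 0\<close> pX pY ne by simp
qed

lemma ultrametric_if_eq_dinf:
  assumes ultX: "ultrametric X dX" and ultY: "ultrametric Y dY"
    and ms: "Metric_space (X \<times> Y) d"
    and eq: "\<forall>p\<in>X \<times> Y. \<forall>q\<in>X \<times> Y. d p q = dinf dX dY p q"
  shows "ultrametric (X \<times> Y) d"
  unfolding ultrametric_def
proof (intro conjI ms ballI)
  fix a b c assume abc: "a \<in> X \<times> Y" "b \<in> X \<times> Y" "c \<in> X \<times> Y"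
  have "dX (fst a) (fst b) \<le> max (dX (fst a) (fst c)) (dX (fst c) (fst b))"
    "dY (snd a) (snd b) \<le> max (dY (snd a) (snd c)) (dY (snd c) (snd b))"
    using ultrametricD[OF ultX] ultrametricD[OF ultY] abc by auto
  then show "d a b \<le> max (d a c) (d c b)"
    using eq abc unfolding dinf_def by auto
qed

theorem theorem4p1:
  fixes X :: "'a set" and dX :: "'a \<Rightarrow> 'a \<Rightarrow> real"
    and Y :: "'b set" and dY :: "'b \<Rightarrow> 'b \<Rightarrow> real"
    and d :: "'a \<times> 'b \<Rightarrow> 'a \<times> 'b \<Rightarrow> real"
  assumes "ultrametric X dX" and "ultrametric Y dY"
    and "Metric_space (X \<times> Y) d"
    and "partial_distance_preserving X dX Y dY d"
    and "\<forall>p\<in>X \<times> Y. \<forall>q\<in>X \<times> Y. dinf dX dY p q \<le> d p q"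
  shows "ultrametric (X \<times> Y) d \<longleftrightarrow>
    (\<forall>W Z \<epsilon>. compactin (Metric_space.mtopology X dX) W \<longrightarrow>
              compactin (Metric_space.mtopology Y dY) Z \<longrightarrow> \<epsilon> > 0 \<longrightarrow>
       packing_number d \<epsilon> (W \<times> Z) = packing_number dX \<epsilon> W * packing_number dY \<epsilon> Z)"
proof
  assume "ultrametric (X \<times> Y) d"
  then show "\<forall>W Z \<epsilon>. compactin (Metric_space.mtopology X dX) W \<longrightarrow>
              compactin (Metric_space.mtopology Y dY) Z \<longrightarrow> \<epsilon> > 0 \<longrightarrow>
       packing_number d \<epsilon> (W \<times> Z) = packing_number dX \<epsilon> W * packing_number dY \<epsilon> Z"
    using packing_number_product[OF assms(1,2) _ assms(4,5)] by blast
next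
  assume formula: "\<forall>W Z \<epsilon>. compactin (Metric_space.mtopology X dX) W \<longrightarrow>
              compactin (Metric_space.mtopology Y dY) Z \<longrightarrow> \<epsilon> > 0 \<longrightarrow>
       packing_number d \<epsilon> (W \<times> Z) = packing_number dX \<epsilon> W * packing_number dY \<epsilon> Z"
  have "d (x1, y1) (x2, y2) = dinf dX dY (x1, y1) (x2, y2)"
    if mem: "x1 \<in> X" "x2 \<in> X" "y1 \<in> Y" "y2 \<in> Y" for x1 y1 x2 y2
  proof -
    have "compactin (Metric_space.mtopology X dX) {x1, x2}"
      "compactin (Metric_space.mtopology Y dY) {y1, y2}"
      using mem assms(1,2)
      by (auto intro!: finite_imp_compactin simp: Metric_space.topspace_mtopology ultrametric_metric)
    then have "d (x1, y1) (x2, y2) \<le> dinf dX dY (x1, y1) (x2, y2)"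
      using product_formula_imp_le_dinf[OF assms(1-3) mem] formula by blast
    then show ?thesis using assms(5) mem by (simp add: order_antisym)
  qed
  then show "ultrametric (X \<times> Y) d"
    using ultrametric_if_eq_dinf[OF assms(1-3)] by force
qed

end
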